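(* Let $X$ be a univariate $L^2$-continuous stochastic process on a compact interval $\mathcal{T}$ with mean $\mu$ and covariance kernel $\kappa$, and let $(\lambda_i,\xi_i)$, $i=1,\dots,m$, be the $m$ largest eigenpairs of the integral operator with kernel $\kappa$, with $\lambda_m>0$. Let $\mathcal{T}=\mathcal{T}_1\cup\dots\cup\mathcal{T}_d$ with pairwise disjoint $\mathcal{T}_a$, $D=\{1,\dots,d\}$. For $R\subseteq D$ let $\hat X^R(t)=X(t)$ if $t\in\bigcup_{b\in R}\mathcal{T}_b$ and $\hat X^R(t)=\mu(t)$ otherwise, and for $a\in D$, $R\subseteq D\setminus\{a\}$, let $\Delta_{\mathcal{T}_a}\mathrm{fmd}^2(\hat X^R,\mu;\kappa,m)=\mathrm{fmd}^2(\hat X^{R\cup\{a\}},\mu;\kappa,m)-\mathrm{fmd}^2(\hat X^R,\mu;\kappa,m)$. Then $$\theta_{\mathcal{T}_a}(X,\mu;\kappa,m):=\sum_{R\subseteq D\setminus\{a\}}\frac{|R|!(d-|R|-1)!}{d!}\Delta_{\mathcal{T}_a}\mathrm{fmd}^2(\hat X^R,\mu;\kappa,m)=\sum_{i=1}^m\frac{1}{\lambda_i}\langle X-\mu,\xi_i\rangle_{\mathcal{T}_a}\langle X-\mu,\xi_i\rangle.$$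
   Context: $\langle f,g\rangle=\int_{\mathcal{T}}f(t)g(t)dt$ and $\langle f,g\rangle_{\mathcal{T}_a}=\int_{\mathcal{T}_a}f(t)g(t)dt$. The squared truncated functional Mahalanobis distance is $\mathrm{fmd}^2(Y,\mu;\kappa,m)=\sum_{i=1}^m\lambda_i^{-1}\langle Y-\mu,\xi_i\rangle^2$. *)

theory Defs
  imports "HOL-Probability.Probability"
begin

definition ip :: "real set \<Rightarrow> (real \<Rightarrow> real) \<Rightarrow> (real \<Rightarrow> real) \<Rightarrow> real" where
  "ip S f g = (LINT t:S|lborel. f t * g t)"

definition fmd2 :: "real set \<Rightarrow> (nat \<Rightarrow> real) \<Rightarrow> (nat \<Rightarrow> real \<Rightarrow> real) \<Rightarrow> nat
    \<Rightarrow> (real \<Rightarrow> real) \<Rightarrow> (real \<Rightarrow> real) \<Rightarrow> real" where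
  "fmd2 T lam xi m Y mu = (\<Sum>i\<in>{1..m}. (1 / lam i) * (ip T (\<lambda>t. Y t - mu t) (xi i))^2)"

definition Xhat :: "(nat \<Rightarrow> real set) \<Rightarrow> nat set \<Rightarrow> (real \<Rightarrow> real) \<Rightarrow> (real \<Rightarrow> real) \<Rightarrow> real \<Rightarrow> real" where
  "Xhat Tp R Y mu t = (if t \<in> (\<Union>b\<in>R. Tp b) then Y t else mu t)"

definition theta :: "real set \<Rightarrow> (nat \<Rightarrow> real set) \<Rightarrow> nat \<Rightarrow> nat \<Rightarrow> (nat \<Rightarrow> real)
    \<Rightarrow> (nat \<Rightarrow> real \<Rightarrow> real) \<Rightarrow> nat \<Rightarrow> (real \<Rightarrow> real) \<Rightarrow> (real \<Rightarrow> real) \<Rightarrow> real" where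
  "theta T Tp d a lam xi m Y mu =
     (\<Sum>R\<in>Pow ({1..d} - {a}).
        (real (fact (card R) * fact (d - card R - 1)) / real (fact d)) *
        (fmd2 T lam xi m (Xhat Tp (insert a R) Y mu) mu - fmd2 T lam xi m (Xhat Tp R Y mu) mu))"

end

theory Submission
  imports Defs
begin

(* With c i b = <X - mu, xi i> restricted to the piece T_b, the score of the imputed curve
   is additive over pieces: <Xhat R - mu, xi i> = sum of c i b over b in R.  Hence fmd2 of
   Xhat R is a weighted sum of squares of additive games, and the marginal contribution of a
   is (c i a)^2 + 2 c i a (sum of c i b over R).  The Shapley weights sum to 1, and by the
   symmetry R |-> (D - {a}) - R every other piece lies in R with total weight 1/2; so theta
   equals the sum of c i a (c i a + sum over b ~= a of c i b) / lam i, i.e. of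
   c i a <X - mu, xi i> / lam i.  The only analytic input is that (X - mu) xi i is
   integrable on T, for which mu must be continuous: this follows from L2-continuity. *)

lemma integrable_mult_of_square_integrable:
  fixes f g :: "'a \<Rightarrow> real"
  assumes [measurable]: "f \<in> borel_measurable M" "g \<in> borel_measurable M"
    and "integrable M (\<lambda>x. (f x)^2)" "integrable M (\<lambda>x. (g x)^2)"
  shows "integrable M (\<lambda>x. f x * g x)"
proof (rule Bochner_Integration.integrable_bound)
  show "integrable M (\<lambda>x. (f x)^2 + (g x)^2)" using assms by simp
  show "AE x in M. norm (f x * g x) \<le> norm ((f x)^2 + (g x)^2)"
  proof (intro AE_I2)
    fix x
    have "2 * \<bar>f x\<bar> * \<bar>g x\<bar> \<le> (f x)^2 + (g x)^2"
      using sum_squares_bound[of "\<bar>f x\<bar>" "\<bar>g x\<bar>"] by simp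
    moreover have "0 \<le> \<bar>f x\<bar> * \<bar>g x\<bar>" by simp
    ultimately show "norm (f x * g x) \<le> norm ((f x)^2 + (g x)^2)"
      unfolding real_norm_def abs_mult by linarith
  qed
qed simp

lemma set_integrable_mult_of_square_integrable:
  fixes f g :: "real \<Rightarrow> real"
  assumes "set_borel_measurable M S f" "set_borel_measurable M S g"
    and "set_integrable M S (\<lambda>x. (f x)^2)" "set_integrable M S (\<lambda>x. (g x)^2)"
  shows "set_integrable M S (\<lambda>x. f x * g x)"
proof -
  have sq: "(indicator S x *\<^sub>R h x)^2 = indicator S x *\<^sub>R (h x)^2" for h :: "real \<Rightarrow> real" and x
    by (simp add: indicator_def)
  have "integrable M (\<lambda>x. (indicator S x *\<^sub>R f x) * (indicator S x *\<^sub>R g x))"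
    using assms unfolding set_borel_measurable_def set_integrable_def
    by (intro integrable_mult_of_square_integrable) (simp_all only: sq)
  moreover have "(indicator S x *\<^sub>R f x) * (indicator S x *\<^sub>R g x) = indicator S x *\<^sub>R (f x * g x)"
    for x
    by (simp add: indicator_def)
  ultimately show ?thesis
    unfolding set_integrable_def by (simp only:)
qed

lemma (in prob_space) square_expectation_le:
  fixes f :: "'a \<Rightarrow> real"
  assumes "f \<in> borel_measurable M" "integrable M (\<lambda>x. (f x)^2)"
  shows "(expectation f)^2 \<le> expectation (\<lambda>x. (f x)^2)"
  using variance_positive[of f] variance_eq[OF square_integrable_imp_integrable[OF assms] assms(2)]
  by simp

lemma (in prob_space) continuous_on_expectation_of_L2_continuous:
  fixes X :: "'a \<Rightarrow> real \<Rightarrow> real"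
  assumes rv: "\<forall>t\<in>S. (\<lambda>w. X w t) \<in> borel_measurable M"
    and second_moment: "\<forall>t\<in>S. integrable M (\<lambda>w. (X w t)^2)"
    and L2_cont: "\<forall>t\<in>S. ((\<lambda>s. expectation (\<lambda>w. (X w s - X w t)^2)) \<longlongrightarrow> 0) (at t within S)"
  shows "continuous_on S (\<lambda>t. expectation (\<lambda>w. X w t))"
  unfolding continuous_on_def
proof
  fix t assume t: "t \<in> S"
  have "(expectation (\<lambda>w. X w s) - expectation (\<lambda>w. X w t))^2
      \<le> expectation (\<lambda>w. (X w s - X w t)^2)" if s: "s \<in> S" for s
  proof -
    have "integrable M (\<lambda>w. X w s * X w t)"
      using rv second_moment s t by (intro integrable_mult_of_square_integrable) auto
    then have "integrable M (\<lambda>w. (X w s)^2 + (X w t)^2 - 2 * (X w s * X w t))"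
      using second_moment s t by simp
    then have sq: "integrable M (\<lambda>w. (X w s - X w t)^2)"
      by (simp add: power2_diff mult.assoc)
    have "integrable M (\<lambda>w. X w u)" if "u \<in> S" for u
      by (rule square_integrable_imp_integrable) (use rv second_moment that in auto)
    then show ?thesis
      using square_expectation_le[of "\<lambda>w. X w s - X w t", OF _ sq] rv s t by simp
  qed
  then have "((\<lambda>s. (expectation (\<lambda>w. X w s) - expectation (\<lambda>w. X w t))^2) \<longlongrightarrow> 0) (at t within S)"
    by (intro tendsto_sandwich[OF _ _ tendsto_const L2_cont[rule_format, OF t]])
      (simp_all add: eventually_at_filter)
  then have "((\<lambda>s. expectation (\<lambda>w. X w s) - expectation (\<lambda>w. X w t)) \<longlongrightarrow> 0) (at t within S)"
    by (simp add: power_tendsto_0_iff)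
  then show "((\<lambda>t. expectation (\<lambda>w. X w t)) \<longlongrightarrow> expectation (\<lambda>w. X w t)) (at t within S)"
    by (simp add: Lim_null[symmetric])
qed

definition shapley_weight :: "nat \<Rightarrow> nat \<Rightarrow> real" where
  "shapley_weight d k = real (fact k * fact (d - k - 1)) / real (fact d)"

lemma sum_Pow_card:
  assumes "finite A"
  shows "(\<Sum>R\<in>Pow A. g (card R)) = (\<Sum>k\<le>card A. of_nat (card A choose k) * g k)"
proof -
  have "(\<Sum>R\<in>Pow A. g (card R)) = (\<Sum>k\<le>card A. \<Sum>R\<in>{R\<in>Pow A. card R = k}. g (card R))"
    using assms by (intro sum.group[symmetric]) (auto intro: card_mono)
  also have "\<dots> = (\<Sum>k\<le>card A. of_nat (card A choose k) * g k)"
    using n_subsets[OF assms] by (intro sum.cong) (auto simp: Pow_def)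
  finally show ?thesis .
qed

lemma sum_shapley_weight:
  assumes "finite A" "card A + 1 = d"
  shows "(\<Sum>R\<in>Pow A. shapley_weight d (card R)) = 1"
proof -
  let ?n = "card A"
  have "(\<Sum>R\<in>Pow A. shapley_weight d (card R)) = (\<Sum>k\<le>?n. real (fact ?n) / real (fact d))"
    unfolding sum_Pow_card[OF assms(1)]
  proof (intro sum.cong refl)
    fix k assume "k \<in> {..?n}"
    then have "real (fact k * fact (?n - k) * (?n choose k)) = real (fact ?n)"
      by (subst binomial_fact_lemma) auto
    moreover have "d - k - 1 = ?n - k" using assms(2) by simp
    ultimately show "real (?n choose k) * shapley_weight d k = real (fact ?n) / real (fact d)"
      by (simp add: shapley_weight_def field_simps)
  qed
  also have "\<dots> = real (Suc ?n) * real (fact ?n) / real (fact (Suc ?n))"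
    using assms(2) by simp
  also have "\<dots> = 1"
    by (simp only: fact_Suc of_nat_mult) simp
  finally show ?thesis .
qed

lemma shapley_weight_complement:
  assumes "finite A" "card A + 1 = d" "R \<subseteq> A"
  shows "shapley_weight d (card (A - R)) = shapley_weight d (card R)"
proof -
  have "card R \<le> card A" using assms by (simp add: card_mono)
  then have "card (A - R) = card A - card R" "d - (card A - card R) - 1 = card R"
      "d - card R - 1 = card A - card R"
    using assms by (auto simp: card_Diff_subset finite_subset)
  then show ?thesis by (simp add: shapley_weight_def mult.commute)
qed

lemma sum_shapley_weight_mult_sum:
  assumes "finite A" "card A + 1 = d"
  shows "(\<Sum>R\<in>Pow A. shapley_weight d (card R) * sum c R) = sum c A / 2"
proof -
  let ?S = "\<Sum>R\<in>Pow A. shapley_weight d (card R) * sum c R"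
  have "bij_betw (\<lambda>R. A - R) (Pow A) (Pow A)"
    by (rule bij_betwI[where g = "\<lambda>R. A - R"]) auto
  then have "?S = (\<Sum>R\<in>Pow A. shapley_weight d (card (A - R)) * sum c (A - R))"
    by (rule sum.reindex_bij_betw[symmetric])
  also have "\<dots> = (\<Sum>R\<in>Pow A. shapley_weight d (card R) * (sum c A - sum c R))"
    using assms by (intro sum.cong refl)
      (simp add: shapley_weight_complement sum_diff finite_subset)
  also have "\<dots> = sum c A - ?S"
    by (simp add: right_diff_distrib sum_subtractf sum_distrib_right[symmetric]
        sum_shapley_weight[OF assms])
  finally show ?thesis by simp
qed

lemma shapley_value_square_sum:
  fixes c :: "'a \<Rightarrow> real"
  assumes "finite A" "card A + 1 = d" "a \<notin> A"
  shows "(\<Sum>R\<in>Pow A. shapley_weight d (card R) * ((sum c (insert a R))^2 - (sum c R)^2))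
       = c a * sum c (insert a A)"
proof -
  have "(sum c (insert a R))^2 - (sum c R)^2 = (c a)^2 + 2 * c a * sum c R" if "R \<in> Pow A" for R
    using that assms by (subst sum.insert) (auto simp: finite_subset power2_sum)
  then have "(\<Sum>R\<in>Pow A. shapley_weight d (card R) * ((sum c (insert a R))^2 - (sum c R)^2))
      = (c a)^2 * (\<Sum>R\<in>Pow A. shapley_weight d (card R))
        + 2 * c a * (\<Sum>R\<in>Pow A. shapley_weight d (card R) * sum c R)"
    by (simp add: algebra_simps sum.distrib sum_distrib_left)
  also have "\<dots> = c a * sum c (insert a A)"
    using assms by (simp add: sum_shapley_weight sum_shapley_weight_mult_sum power2_eq_square
        distrib_left)
  finally show ?thesis .
qed

lemma ip_Xhat_diff_eq_sum:
  assumes "finite R" "\<forall>b\<in>R. Tp b \<in> sets lborel" "disjoint_family_on Tp R"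
    and "(\<Union>b\<in>R. Tp b) \<subseteq> T" "set_integrable lborel T (\<lambda>t. (Y t - mu t) * g t)"
  shows "ip T (\<lambda>t. Xhat Tp R Y mu t - mu t) g = (\<Sum>b\<in>R. ip (Tp b) (\<lambda>t. Y t - mu t) g)"
proof -
  have "ip T (\<lambda>t. Xhat Tp R Y mu t - mu t) g = (LINT t:(\<Union>b\<in>R. Tp b)|lborel. (Y t - mu t) * g t)"
    unfolding ip_def set_lebesgue_integral_def
    by (intro Bochner_Integration.integral_cong refl)
      (use assms(4) in \<open>auto simp: Xhat_def indicator_def\<close>)
  also have "\<dots> = (\<Sum>b\<in>R. ip (Tp b) (\<lambda>t. Y t - mu t) g)"
    unfolding ip_def
  proof (rule set_integral_finite_UN_AE)
    show "AE x in lborel. x \<in> Tp b \<and> x \<in> Tp b' \<longrightarrow> b = b'" if "b \<in> R" "b' \<in> R" for b b'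
      using that assms(3) unfolding disjoint_family_on_def by (intro AE_I2) blast
    show "set_integrable lborel (Tp b) (\<lambda>t. (Y t - mu t) * g t)" if "b \<in> R" for b
      using that assms by (intro set_integrable_subset[OF assms(5)]) auto
  qed (use assms in auto)
  finally show ?thesis .
qed

lemma theta_eq_sum_ip_piece_mult_ip:
  assumes pieces_meas: "\<forall>b\<in>{1..d}. Tp b \<in> sets lborel"
    and disjoint: "disjoint_family_on Tp {1..d}"
    and cover: "(\<Union>b\<in>{1..d}. Tp b) = T"
    and a_in: "a \<in> {1..d}"
    and integrable: "\<forall>i\<in>{1..m}. set_integrable lborel T (\<lambda>t. (Y t - mu t) * xi i t)"
  shows "theta T Tp d a lam xi m Y mu =
    (\<Sum>i\<in>{1..m}. 1 / lam i * ip (Tp a) (\<lambda>t. Y t - mu t) (xi i) * ip T (\<lambda>t. Y t - mu t) (xi i))"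
proof -
  let ?A = "{1..d} - {a}"
  define c where "c i b = ip (Tp b) (\<lambda>t. Y t - mu t) (xi i)" for i b
  have ip_Xhat: "ip T (\<lambda>t. Xhat Tp R Y mu t - mu t) (xi i) = sum (c i) R"
    if "i \<in> {1..m}" "R \<subseteq> {1..d}" for i R
    unfolding c_def using that pieces_meas cover integrable
    by (intro ip_Xhat_diff_eq_sum disjoint_family_on_mono[OF _ disjoint])
      (auto intro: finite_subset)
  have fmd2_Xhat: "fmd2 T lam xi m (Xhat Tp R Y mu) mu = (\<Sum>i\<in>{1..m}. 1 / lam i * (sum (c i) R)^2)"
    if "R \<subseteq> {1..d}" for R
    unfolding fmd2_def using that by (simp add: ip_Xhat)
  have ip_total: "ip T (\<lambda>t. Y t - mu t) (xi i) = sum (c i) (insert a ?A)" if "i \<in> {1..m}" for i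
  proof -
    have "Xhat Tp {1..d} Y mu t = Y t" if "t \<in> T" for t
      using that cover by (simp add: Xhat_def)
    then have "ip T (\<lambda>t. Y t - mu t) (xi i) = ip T (\<lambda>t. Xhat Tp {1..d} Y mu t - mu t) (xi i)"
      unfolding ip_def set_lebesgue_integral_def
      by (intro Bochner_Integration.integral_cong refl) (auto simp: indicator_def)
    moreover have "insert a ?A = {1..d}" using a_in by auto
    ultimately show ?thesis using ip_Xhat[OF that] by simp
  qed
  have A: "finite ?A" "card ?A + 1 = d" "a \<notin> ?A"
    using a_in by auto
  have "theta T Tp d a lam xi m Y mu
      = (\<Sum>R\<in>Pow ?A. \<Sum>i\<in>{1..m}.
           1 / lam i * (shapley_weight d (card R) * ((sum (c i) (insert a R))^2 - (sum (c i) R)^2)))"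
    unfolding theta_def shapley_weight_def[symmetric]
  proof (intro sum.cong refl)
    fix R assume "R \<in> Pow ?A"
    then have "R \<subseteq> {1..d}" "insert a R \<subseteq> {1..d}" using a_in by auto
    then show "shapley_weight d (card R) * (fmd2 T lam xi m (Xhat Tp (insert a R) Y mu) mu
        - fmd2 T lam xi m (Xhat Tp R Y mu) mu)
      = (\<Sum>i\<in>{1..m}. 1 / lam i *
          (shapley_weight d (card R) * ((sum (c i) (insert a R))^2 - (sum (c i) R)^2)))"
      by (simp only: fmd2_Xhat sum_subtractf[symmetric] sum_distrib_left right_diff_distrib
          mult.left_commute)
  qed
  also have "\<dots> = (\<Sum>i\<in>{1..m}. 1 / lam i * (\<Sum>R\<in>Pow ?A.
           shapley_weight d (card R) * ((sum (c i) (insert a R))^2 - (sum (c i) R)^2)))"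
    by (simp only: sum.swap[of _ "Pow ?A"] sum_distrib_left)
  also have "\<dots> = (\<Sum>i\<in>{1..m}. 1 / lam i * c i a * sum (c i) (insert a ?A))"
    by (simp only: shapley_value_square_sum[OF A] mult.assoc)
  finally show ?thesis
    by (simp add: ip_total c_def)
qed

theorem proposition1:
  fixes M :: "'w measure" and X :: "'w \<Rightarrow> real \<Rightarrow> real"
    and lo hi :: real and mu :: "real \<Rightarrow> real" and kappa :: "real \<Rightarrow> real \<Rightarrow> real"
    and lam :: "nat \<Rightarrow> real" and xi :: "nat \<Rightarrow> real \<Rightarrow> real" and m :: nat
    and Tp :: "nat \<Rightarrow> real set" and d a :: nat and \<omega> :: 'w
  assumes prob: "prob_space M"
    and interval: "lo < hi"
    and rv: "\<forall>t\<in>{lo..hi}. (\<lambda>w. X w t) \<in> borel_measurable M"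
    and second_moment: "\<forall>t\<in>{lo..hi}. integrable M (\<lambda>w. (X w t)^2)"
    and L2_cont: "\<forall>t\<in>{lo..hi}.
        ((\<lambda>s. integral\<^sup>L M (\<lambda>w. (X w s - X w t)^2)) \<longlongrightarrow> 0) (at t within {lo..hi})"
    and mean: "\<forall>t\<in>{lo..hi}. mu t = integral\<^sup>L M (\<lambda>w. X w t)"
    and cov: "\<forall>s\<in>{lo..hi}. \<forall>t\<in>{lo..hi}.
        kappa s t = integral\<^sup>L M (\<lambda>w. (X w s - mu s) * (X w t - mu t))"
    and m_pos: "m \<ge> 1"
    and xi_meas: "\<forall>i\<in>{1..m}. xi i \<in> borel_measurable lborel"
    and xi_L2: "\<forall>i\<in>{1..m}. set_integrable lborel {lo..hi} (\<lambda>t. (xi i t)^2)"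
    and orthonormal: "\<forall>i\<in>{1..m}. \<forall>j\<in>{1..m}.
        ip {lo..hi} (xi i) (xi j) = (if i = j then 1 else 0)"
    and eigen: "\<forall>i\<in>{1..m}. \<forall>s\<in>{lo..hi}.
        ip {lo..hi} (kappa s) (xi i) = lam i * xi i s"
    and lam_sorted: "\<forall>i\<in>{1..m}. \<forall>j\<in>{1..m}. i \<le> j \<longrightarrow> lam j \<le> lam i"
    and lam_m_pos: "lam m > 0"
    and largest: "\<And>\<nu> \<phi>. \<phi> \<in> borel_measurable lborel \<Longrightarrow>
        set_integrable lborel {lo..hi} (\<lambda>t. (\<phi> t)^2) \<Longrightarrow>
        ip {lo..hi} \<phi> \<phi> \<noteq> 0 \<Longrightarrow>
        (\<forall>s\<in>{lo..hi}. ip {lo..hi} (kappa s) \<phi> = \<nu> * \<phi> s) \<Longrightarrow>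
        (\<forall>i\<in>{1..m}. ip {lo..hi} \<phi> (xi i) = 0) \<Longrightarrow> \<nu> \<le> lam m"
    and d_pos: "d \<ge> 1"
    and pieces_meas: "\<forall>b\<in>{1..d}. Tp b \<in> sets lborel"
    and pieces_disj: "\<forall>b\<in>{1..d}. \<forall>c\<in>{1..d}. b \<noteq> c \<longrightarrow> Tp b \<inter> Tp c = {}"
    and pieces_cover: "(\<Union>b\<in>{1..d}. Tp b) = {lo..hi}"
    and a_in: "a \<in> {1..d}"
    and omega: "\<omega> \<in> space M"
    and path_meas: "X \<omega> \<in> borel_measurable lborel"
    and path_L2: "set_integrable lborel {lo..hi} (\<lambda>t. (X \<omega> t)^2)"
  shows "theta {lo..hi} Tp d a lam xi m (X \<omega>) mu =
    (\<Sum>i\<in>{1..m}. (1 / lam i) * ip (Tp a) (\<lambda>t. X \<omega> t - mu t) (xi i)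
                                * ip {lo..hi} (\<lambda>t. X \<omega> t - mu t) (xi i))"
proof -
  interpret prob_space M by (rule prob)
  let ?T = "{lo..hi}"
  have "continuous_on ?T (\<lambda>t. expectation (\<lambda>w. X w t))"
    using rv second_moment L2_cont by (rule continuous_on_expectation_of_L2_continuous)
  then have mu_cont: "continuous_on ?T mu"
    using continuous_on_cong[OF refl, of ?T mu] mean by simp
  have mu_L2: "set_integrable lborel ?T (\<lambda>t. (mu t)^2)"
    by (intro borel_integrable_atLeastAtMost' continuous_on_power mu_cont)
  have mu_meas: "set_borel_measurable lborel ?T mu"
    using borel_integrable_atLeastAtMost'[OF mu_cont]
    unfolding set_integrable_def set_borel_measurable_def by (rule borel_measurable_integrable)
  have "set_integrable lborel ?T (\<lambda>t. (X \<omega> t - mu t) * xi i t)" if "i \<in> {1..m}" for i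
  proof -
    have [measurable]: "xi i \<in> borel_measurable borel" using xi_meas that by simp
    have "set_borel_measurable lborel ?T (X \<omega>)" "set_borel_measurable lborel ?T (xi i)"
      using path_meas unfolding set_borel_measurable_def by measurable
    then have "set_integrable lborel ?T (\<lambda>t. X \<omega> t * xi i t - mu t * xi i t)"
      using path_L2 mu_L2 mu_meas xi_L2 that
      by (intro set_integral_diff(1) set_integrable_mult_of_square_integrable) auto
    then show ?thesis by (simp add: left_diff_distrib)
  qed
  moreover have "disjoint_family_on Tp {1..d}"
    using pieces_disj unfolding disjoint_family_on_def by blast
  ultimately show ?thesis
    using pieces_meas pieces_cover a_in by (intro theta_eq_sum_ip_piece_mult_ip) auto
qed

end
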